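(* Let $G=(V,E)$ be a $(2,2)$-$C_i$-tight graph or a $(2,2)$-$C_s$-tight graph, with involution $v\mapsto v'$. Suppose $v\in V$ has degree 3 with $N(v)=\{x,y,z\}$ and $xy\notin E$. If no $2$-critical subset of $V\setminus\{v,v'\}$ contains both $x$ and $y$, then there is no $W\subseteq V\setminus\{v,v'\}$ with $x,x',y,y'\in W$ and $i_G(W)=2|W|-3$.
   Context: A $\mathbb{Z}_2$-symmetric graph is a finite simple graph $G=(V,E)$ with an automorphism $\theta$ satisfying $\theta^2=\mathrm{id}$; write $v'=\theta(v)$. A vertex is fixed if $v'=v$; an edge $uv$ is fixed if $\{u',v'\}=\{u,v\}$. $G$ is $(2,2)$-sparse if every subgraph $(V',E')$ with $V'\ne\emptyset$ has $|E'|\le 2|V'|-2$, and $(2,2)$-tight if also $|E|=2|V|-2$. $G$ is $(2,2)$-$C_i$-tight if it is $(2,2)$-tight and $\theta$ fixes no vertex and no edge; $(2,2)$-$C_s$-tight if it is $(2,2)$-tight and $\theta$ fixes no edge. For $X\subseteq V$, $i_G(X)$ is the number of edges of the induced subgraph $G[X]$; $X$ is $k$-critical if $i_G(X)=2|X|-k$. *)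

theory Defs
  imports Main
begin

definition simple_graph :: "'a set \<Rightarrow> 'a set set \<Rightarrow> bool" where
  "simple_graph V E \<longleftrightarrow> finite V \<and> (\<forall>e\<in>E. e \<subseteq> V \<and> card e = 2)"

definition Z2_symmetric :: "'a set \<Rightarrow> 'a set set \<Rightarrow> ('a \<Rightarrow> 'a) \<Rightarrow> bool" where
  "Z2_symmetric V E \<theta> \<longleftrightarrow> simple_graph V E \<and> bij_betw \<theta> V V \<and>
     (\<forall>v\<in>V. \<theta> (\<theta> v) = v) \<and>
     (\<forall>u\<in>V. \<forall>v\<in>V. {u, v} \<in> E \<longleftrightarrow> {\<theta> u, \<theta> v} \<in> E)"

definition sparse22 :: "'a set \<Rightarrow> 'a set set \<Rightarrow> bool" where
  "sparse22 V E \<longleftrightarrow> (\<forall>V' E'. V' \<subseteq> V \<and> E' \<subseteq> E \<and> (\<forall>e\<in>E'. e \<subseteq> V') \<and> V' \<noteq> {}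
       \<longrightarrow> int (card E') \<le> 2 * int (card V') - 2)"

definition tight22 :: "'a set \<Rightarrow> 'a set set \<Rightarrow> bool" where
  "tight22 V E \<longleftrightarrow> sparse22 V E \<and> int (card E) = 2 * int (card V) - 2"

definition fixed_vertex :: "('a \<Rightarrow> 'a) \<Rightarrow> 'a \<Rightarrow> bool" where
  "fixed_vertex \<theta> v \<longleftrightarrow> \<theta> v = v"

definition fixed_edge :: "('a \<Rightarrow> 'a) \<Rightarrow> 'a set \<Rightarrow> bool" where
  "fixed_edge \<theta> e \<longleftrightarrow> \<theta> ` e = e"

definition Ci_tight22 :: "'a set \<Rightarrow> 'a set set \<Rightarrow> ('a \<Rightarrow> 'a) \<Rightarrow> bool" where
  "Ci_tight22 V E \<theta> \<longleftrightarrow> Z2_symmetric V E \<theta> \<and> tight22 V E \<and>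
     (\<forall>v\<in>V. \<not> fixed_vertex \<theta> v) \<and> (\<forall>e\<in>E. \<not> fixed_edge \<theta> e)"

definition Cs_tight22 :: "'a set \<Rightarrow> 'a set set \<Rightarrow> ('a \<Rightarrow> 'a) \<Rightarrow> bool" where
  "Cs_tight22 V E \<theta> \<longleftrightarrow> Z2_symmetric V E \<theta> \<and> tight22 V E \<and>
     (\<forall>e\<in>E. \<not> fixed_edge \<theta> e)"

definition iG :: "'a set set \<Rightarrow> 'a set \<Rightarrow> nat" where
  "iG E X = card {e\<in>E. e \<subseteq> X}"

definition critical :: "'a set set \<Rightarrow> int \<Rightarrow> 'a set \<Rightarrow> bool" where
  "critical E k X \<longleftrightarrow> int (iG E X) = 2 * int (card X) - k"

definition nbhd :: "'a set set \<Rightarrow> 'a \<Rightarrow> 'a set" where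
  "nbhd E v = {u. {u, v} \<in> E}"

definition degree :: "'a set set \<Rightarrow> 'a \<Rightarrow> nat" where
  "degree E v = card {e\<in>E. v \<in> e}"

end

theory Submission
  imports Defs
begin

text \<open>Write \<open>W' = \<theta> ` W\<close>. Since \<open>i\<^sub>G\<close> is supermodular,
  \<open>i(W \<union> W') + i(W \<inter> W') \<ge> i(W) + i(W') = 2|W \<union> W'| + 2|W \<inter> W'| - 6\<close>.
  The intersection contains \<open>x\<close> and \<open>y\<close>, so it is not 2-critical and by sparsity
  \<open>i(W \<inter> W') \<le> 2|W \<inter> W'| - 3\<close>; hence \<open>i(W \<union> W') \<ge> 2|W \<union> W'| - 3\<close>.
  But \<open>W \<union> W'\<close> is \<open>\<theta>\<close>-invariant and no edge is fixed, so its edges come in pairs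
  \<open>{e, \<theta> ` e}\<close> and \<open>i(W \<union> W')\<close> is even. Together with sparsity this makes
  \<open>W \<union> W'\<close> a 2-critical set containing \<open>x\<close> and \<open>y\<close>.\<close>

lemma even_card_if_fixpoint_free_involution:
  assumes "finite S" "\<forall>a\<in>S. f a \<in> S \<and> f (f a) = a \<and> f a \<noteq> a"
  shows "even (card S)"
  using assms
proof (induction "card S" arbitrary: S rule: less_induct)
  case less
  show ?case
  proof (cases "S = {}")
    case False
    then obtain a where a: "a \<in> S" by blast
    define S' where "S' = S - {a, f a}"
    have fa: "f a \<in> S" "f a \<noteq> a" using less.prems a by auto
    have "card {a, f a} \<le> card S" using less.prems(1) a fa by (intro card_mono) auto
    then have card_S: "card S = card S' + 2"
      using less.prems(1) a fa unfolding S'_def by (simp add: card_Diff_subset)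
    have "f b \<in> S' \<and> f (f b) = b \<and> f b \<noteq> b" if "b \<in> S'" for b
    proof -
      have b: "b \<in> S" "b \<noteq> a" "b \<noteq> f a" using that unfolding S'_def by auto
      then have "f b \<noteq> a" "f b \<noteq> f a" using less.prems(2) a by metis+
      then show ?thesis using less.prems(2) b unfolding S'_def by simp
    qed
    then have "even (card S')"
      using less.hyps[of S'] less.prems(1) card_S unfolding S'_def by simp
    then show ?thesis using card_S by simp
  qed simp
qed

lemma finite_edges: "simple_graph V E \<Longrightarrow> finite E"
  unfolding simple_graph_def by (meson PowI finite_Pow_iff finite_subset subsetI)

lemma iG_supermodular:
  assumes "finite E"
  shows "iG E X + iG E Y \<le> iG E (X \<union> Y) + iG E (X \<inter> Y)"
proof -
  let ?A = "{e\<in>E. e \<subseteq> X}" and ?B = "{e\<in>E. e \<subseteq> Y}"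
  have "card ?A + card ?B = card (?A \<union> ?B) + card (?A \<inter> ?B)"
    using assms by (intro card_Un_Int) auto
  moreover have "?A \<inter> ?B = {e\<in>E. e \<subseteq> X \<inter> Y}" by auto
  moreover have "card (?A \<union> ?B) \<le> card {e\<in>E. e \<subseteq> X \<union> Y}"
    using assms by (intro card_mono) auto
  ultimately show ?thesis unfolding iG_def by simp
qed

lemma iG_le_if_sparse22:
  assumes "sparse22 V E" "X \<subseteq> V" "X \<noteq> {}"
  shows "int (iG E X) \<le> 2 * int (card X) - 2"
  using assms unfolding sparse22_def iG_def by auto

lemma Z2_symmetric_edge_subset: "Z2_symmetric V E \<theta> \<Longrightarrow> e \<in> E \<Longrightarrow> e \<subseteq> V"
  unfolding Z2_symmetric_def simple_graph_def by auto

lemma Z2_symmetric_involutive: "Z2_symmetric V E \<theta> \<Longrightarrow> u \<in> V \<Longrightarrow> \<theta> (\<theta> u) = u"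
  unfolding Z2_symmetric_def by blast

lemma Z2_symmetric_image_image:
  assumes "Z2_symmetric V E \<theta>" "X \<subseteq> V"
  shows "\<theta> ` \<theta> ` X = X"
  using assms unfolding Z2_symmetric_def by (force simp: image_image)

lemma Z2_symmetric_image_edge:
  assumes "Z2_symmetric V E \<theta>" "e \<in> E"
  shows "\<theta> ` e \<in> E"
proof -
  have "e \<subseteq> V" "card e = 2"
    using assms unfolding Z2_symmetric_def simple_graph_def by auto
  then obtain a b where "e = {a, b}" "a \<in> V" "b \<in> V" by (auto simp: card_2_iff)
  then show ?thesis using assms unfolding Z2_symmetric_def by auto
qed

lemma iG_image:
  assumes G: "Z2_symmetric V E \<theta>" and X: "X \<subseteq> V"
  shows "iG E (\<theta> ` X) = iG E X"
proof -
  have edge_inv: "\<theta> ` \<theta> ` e = e" if "e \<in> E" for e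
    using Z2_symmetric_image_image[OF G Z2_symmetric_edge_subset[OF G that]] .
  have inj: "inj_on ((`) \<theta>) {e\<in>E. e \<subseteq> X}"
    by (rule inj_onI) (metis edge_inv mem_Collect_eq)
  have image: "(`) \<theta> ` {e\<in>E. e \<subseteq> X} = {e\<in>E. e \<subseteq> \<theta> ` X}"
  proof (intro equalityI subsetI)
    fix e assume "e \<in> {e\<in>E. e \<subseteq> \<theta> ` X}"
    then have e: "e \<in> E" "e \<subseteq> \<theta> ` X" by auto
    have "\<theta> ` e \<subseteq> X"
      using image_mono[OF e(2), of \<theta>] Z2_symmetric_image_image[OF G X] by simp
    then have "\<theta> ` e \<in> {e\<in>E. e \<subseteq> X}" using Z2_symmetric_image_edge[OF G e(1)] by simp
    then show "e \<in> (`) \<theta> ` {e\<in>E. e \<subseteq> X}" using edge_inv[OF e(1)] by (metis image_eqI)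
  qed (use Z2_symmetric_image_edge[OF G] in auto)
  show ?thesis unfolding iG_def image[symmetric] by (rule card_image[OF inj])
qed

lemma even_iG_if_invariant:
  assumes G: "Z2_symmetric V E \<theta>" and no_fixed: "\<forall>e\<in>E. \<not> fixed_edge \<theta> e"
    and invariant: "\<theta> ` U \<subseteq> U"
  shows "even (iG E U)"
  unfolding iG_def
proof (rule even_card_if_fixpoint_free_involution[where f = "(`) \<theta>"])
  have "finite E" using G finite_edges unfolding Z2_symmetric_def by blast
  then show "finite {e\<in>E. e \<subseteq> U}" by simp
  show "\<forall>e\<in>{e\<in>E. e \<subseteq> U}. \<theta> ` e \<in> {e\<in>E. e \<subseteq> U} \<and> \<theta> ` \<theta> ` e = e \<and> \<theta> ` e \<noteq> e"
  proof
    fix e assume "e \<in> {e\<in>E. e \<subseteq> U}"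
    then have e: "e \<in> E" "e \<subseteq> U" by auto
    then have "\<theta> ` e \<subseteq> U" using invariant by blast
    then show "\<theta> ` e \<in> {e\<in>E. e \<subseteq> U} \<and> \<theta> ` \<theta> ` e = e \<and> \<theta> ` e \<noteq> e"
      using Z2_symmetric_image_edge[OF G e(1)] no_fixed e(1)
        Z2_symmetric_image_image[OF G Z2_symmetric_edge_subset[OF G e(1)]]
      unfolding fixed_edge_def by auto
  qed
qed

lemma critical_2_Un_image:
  assumes G: "Z2_symmetric V E \<theta>" and T: "tight22 V E"
    and no_fixed: "\<forall>e\<in>E. \<not> fixed_edge \<theta> e"
    and W: "W \<subseteq> V" "critical E 3 W"
    and I: "W \<inter> \<theta> ` W \<noteq> {}" "\<not> critical E 2 (W \<inter> \<theta> ` W)"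
  shows "critical E 2 (W \<union> \<theta> ` W)"
proof -
  let ?W' = "\<theta> ` W"
  have sparse: "sparse22 V E" using T unfolding tight22_def by simp
  have V_finite: "finite V" and W'_sub: "?W' \<subseteq> V" and "inj_on \<theta> V"
    using G unfolding Z2_symmetric_def simple_graph_def bij_betw_def using W(1) by auto
  then have card_W': "card ?W' = card W" using W(1) by (meson card_image inj_on_subset)
  have "card W + card ?W' = card (W \<union> ?W') + card (W \<inter> ?W')"
    using W(1) W'_sub V_finite by (intro card_Un_Int) (auto intro: finite_subset)
  then have card_Un_Int: "int (card (W \<union> ?W')) + int (card (W \<inter> ?W')) = 2 * int (card W)"
    using card_W' by linarith
  have "finite E" using G finite_edges unfolding Z2_symmetric_def by blast
  then have "iG E W + iG E ?W' \<le> iG E (W \<union> ?W') + iG E (W \<inter> ?W')"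
    by (rule iG_supermodular)
  then have supermodular: "2 * int (iG E W) \<le> int (iG E (W \<union> ?W')) + int (iG E (W \<inter> ?W'))"
    using iG_image[OF G W(1)] by linarith
  have Int_sub: "W \<inter> ?W' \<subseteq> V" and Un_sub: "W \<union> ?W' \<subseteq> V"
    using W(1) W'_sub by auto
  have "int (iG E (W \<inter> ?W')) \<le> 2 * int (card (W \<inter> ?W')) - 2"
    using iG_le_if_sparse22[OF sparse Int_sub I(1)] .
  then have "int (iG E (W \<inter> ?W')) \<le> 2 * int (card (W \<inter> ?W')) - 3"
    using I(2) unfolding critical_def by linarith
  then have lower: "int (iG E (W \<union> ?W')) \<ge> 2 * int (card (W \<union> ?W')) - 3"
    using supermodular card_Un_Int W(2) unfolding critical_def by linarith
  have upper: "int (iG E (W \<union> ?W')) \<le> 2 * int (card (W \<union> ?W')) - 2"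
    by (rule iG_le_if_sparse22[OF sparse Un_sub]) (use I(1) in blast)
  have "\<theta> ` (W \<union> ?W') \<subseteq> W \<union> ?W'"
    using Z2_symmetric_image_image[OF G W(1)] by auto
  then have "even (iG E (W \<union> ?W'))" by (rule even_iG_if_invariant[OF G no_fixed])
  then obtain k where "int (iG E (W \<union> ?W')) = 2 * int k" by (auto elim: evenE)
  with lower upper show ?thesis unfolding critical_def by presburger
qed

lemma Z2_symmetric_image_Diff_orbit:
  assumes G: "Z2_symmetric V E \<theta>" and "v \<in> V" "W \<subseteq> V - {v, \<theta> v}"
  shows "\<theta> ` W \<subseteq> V - {v, \<theta> v}"
proof
  fix w assume "w \<in> \<theta> ` W"
  then obtain u where u: "u \<in> V" "u \<noteq> v" "u \<noteq> \<theta> v" and w: "w = \<theta> u"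
    using assms(3) by auto
  have "\<theta> u \<in> V" "\<theta> u \<noteq> \<theta> v"
    using G u \<open>v \<in> V\<close> unfolding Z2_symmetric_def by (auto simp: bij_betw_def inj_on_eq_iff)
  moreover have "\<theta> u \<noteq> v" using u Z2_symmetric_involutive[OF G] by metis
  ultimately show "w \<in> V - {v, \<theta> v}" using w by simp
qed

theorem lemma5p2:
  fixes V :: "'a set" and E :: "'a set set" and \<theta> :: "'a \<Rightarrow> 'a"
  assumes G: "Ci_tight22 V E \<theta> \<or> Cs_tight22 V E \<theta>"
    and v: "v \<in> V" and deg: "degree E v = 3" and N: "nbhd E v = {x, y, z}"
    and xy: "{x, y} \<notin> E"
    and no2: "\<not> (\<exists>X. X \<subseteq> V - {v, \<theta> v} \<and> x \<in> X \<and> y \<in> X \<and> critical E 2 X)"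
  shows "\<not> (\<exists>W. W \<subseteq> V - {v, \<theta> v} \<and> x \<in> W \<and> \<theta> x \<in> W \<and> y \<in> W \<and> \<theta> y \<in> W
              \<and> int (iG E W) = 2 * int (card W) - 3)"
proof
  have Z: "Z2_symmetric V E \<theta>" and T: "tight22 V E" and no_fixed: "\<forall>e\<in>E. \<not> fixed_edge \<theta> e"
    using G unfolding Ci_tight22_def Cs_tight22_def by auto
  have not_critical: "\<not> critical E 2 X" if "X \<subseteq> V - {v, \<theta> v}" "x \<in> X" "y \<in> X" for X
    using no2 that by blast
  assume "\<exists>W. W \<subseteq> V - {v, \<theta> v} \<and> x \<in> W \<and> \<theta> x \<in> W \<and> y \<in> W \<and> \<theta> y \<in> W
              \<and> int (iG E W) = 2 * int (card W) - 3"
  then obtain W where W: "W \<subseteq> V - {v, \<theta> v}" "x \<in> W" "\<theta> x \<in> W" "y \<in> W" "\<theta> y \<in> W"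
    and W_critical: "critical E 3 W" unfolding critical_def by blast
  have W'_sub: "\<theta> ` W \<subseteq> V - {v, \<theta> v}" using Z2_symmetric_image_Diff_orbit[OF Z v W(1)] .
  have "x \<in> V" "y \<in> V" using W by auto
  then have "\<theta> (\<theta> x) = x" "\<theta> (\<theta> y) = y" using Z2_symmetric_involutive[OF Z] by auto
  then have "x \<in> \<theta> ` W" "y \<in> \<theta> ` W" using W(3,5) by (metis image_eqI)+
  then have x_Int: "x \<in> W \<inter> \<theta> ` W" and y_Int: "y \<in> W \<inter> \<theta> ` W" using W by auto
  have "\<not> critical E 2 (W \<inter> \<theta> ` W)"
    using not_critical[OF _ x_Int y_Int] W(1) by blast
  with x_Int have "critical E 2 (W \<union> \<theta> ` W)"
    using critical_2_Un_image[OF Z T no_fixed _ W_critical] W(1) by blast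
  moreover have "W \<union> \<theta> ` W \<subseteq> V - {v, \<theta> v}" using W(1) W'_sub by blast
  ultimately show False using not_critical x_Int y_Int by blast
qed

end
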